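(* Let $d\ge 1$, $\sigma>0$, and let $A_0,A_1\in\mathbb{R}^{d\times d}$ be constant matrices (not assumed to commute). Then the function $Z$ defined in the context (restricted to $[-\sigma,\infty)$) is the unique solution of the initial value problem \[ \dot Z(\vartheta)=A_0Z(\vartheta-\sigma)+Z(\vartheta-\sigma)A_1,\ \ \vartheta\in[0,\infty),\qquad Z(\vartheta)=I,\ \ \vartheta\in[-\sigma,0]. \]
   Context: $\Theta$ and $I$ denote the $d\times d$ zero and identity matrices. Define matrices $Q_{r+1}(r\sigma)$, $r=0,1,2,\dots$, recursively by $Q_1(0)=I$ and $Q_{r+1}(r\sigma)=A_0Q_r((r-1)\sigma)+Q_r((r-1)\sigma)A_1$ for $r\ge 1$. Define $Z:\mathbb{R}\to\mathbb{R}^{d\times d}$ by $Z(\vartheta)=\Theta$ for $\vartheta<-\sigma$, and, for each integer $u\ge 0$ and $\vartheta\in[(u-1)\sigma,u\sigma)$, \[ Z(\vartheta)=\sum_{r=0}^{u}Q_{r+1}(r\sigma)\frac{(\vartheta-(r-1)\sigma)^r}{r!}. \] *)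

theory Defs
  imports "HOL-Analysis.Analysis"
begin

text \<open>QQ A0 A1 r represents the matrix Q_{r+1}(r sigma) of the paper
  (the argument r sigma is only a label).\<close>
fun QQ :: "real^'n^'n \<Rightarrow> real^'n^'n \<Rightarrow> nat \<Rightarrow> real^'n^'n" where
  "QQ A0 A1 0 = mat 1"
| "QQ A0 A1 (Suc r) = A0 ** QQ A0 A1 r + QQ A0 A1 r ** A1"

definition ZZ :: "real^'n^'n \<Rightarrow> real^'n^'n \<Rightarrow> real \<Rightarrow> real \<Rightarrow> real^'n^'n" where
  "ZZ A0 A1 \<sigma> t =
     (if t < - \<sigma> then 0
      else (\<Sum>r = 0..nat (\<lfloor>t / \<sigma>\<rfloor> + 1).
              ((t - (real r - 1) * \<sigma>) ^ r / fact r) *\<^sub>R QQ A0 A1 r))"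

end

theory Submission
  imports Defs
begin

text \<open>Z is a finite combination of the matrices Q_{r+1} with the truncated powers
  (t - (r - 1) \<sigma>)_+^r / r! as coefficients.  Each truncated power differentiates
  into the previous one shifted by \<sigma>, and Q_{r+2} = A_0 Q_{r+1} + Q_{r+1} A_1, so
  differentiating Z term by term yields the delay equation.  Uniqueness is the method of
  steps: on [k \<sigma>, (k + 1) \<sigma>] the delayed argument lies in [-\<sigma>, k \<sigma>], where
  two solutions already agree, so their difference has derivative zero there.\<close>

lemma matrix_add_rdistrib: "(A + B) ** C = A ** C + B ** C"
  by (vector matrix_matrix_mult_def sum.distrib[symmetric] field_simps)

lemma linear_sylvester:
  fixes A :: "real^'m^'m" and B :: "real^'n^'n"
  shows "linear (\<lambda>X :: real^'n^'m. A ** X + X ** B)"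
  by (rule linearI)
    (simp_all add: matrix_add_ldistrib matrix_add_rdistrib matrix_scalar_ac
      scalar_matrix_assoc[symmetric] scaleR_add_right)

definition trunc_power :: "real \<Rightarrow> nat \<Rightarrow> real \<Rightarrow> real" where
  "trunc_power \<sigma> r t =
     (if (real r - 1) * \<sigma> \<le> t then (t - (real r - 1) * \<sigma>) ^ r / fact r else 0)"

lemma has_real_derivative_trunc_power_0:
  assumes "\<sigma> \<ge> 0" "t \<ge> 0"
  shows "(trunc_power \<sigma> 0 has_real_derivative 0) (at t within {0..})"
proof (rule has_field_derivative_transform_within[where d = 1])
  show "((\<lambda>_. 1) has_real_derivative 0) (at t within {0..})"
    by (rule DERIV_const)
qed (use assms in \<open>auto simp: trunc_power_def\<close>)

lemma has_real_derivative_trunc_power_Suc: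
  assumes "t \<ge> 0"
  shows "(trunc_power \<sigma> (Suc n) has_real_derivative trunc_power \<sigma> n (t - \<sigma>))
           (at t within {0..})"
proof (cases n)
  case 0
  show ?thesis
  proof (rule has_field_derivative_transform_within[where d = 1])
    show "((\<lambda>s. s) has_real_derivative trunc_power \<sigma> n (t - \<sigma>)) (at t within {0..})"
      using 0 assms by (simp add: trunc_power_def DERIV_ident)
  qed (use 0 assms in \<open>auto simp: trunc_power_def\<close>)
next
  case (Suc m)
  define c where "c = real n * \<sigma>"
  have power: "((\<lambda>s. (s - c) ^ Suc n / fact (Suc n)) has_vector_derivative
      (x - c) ^ n / fact n) (at x within S)" for x S
  proof -
    have "((\<lambda>s. (s - c) ^ Suc n) has_real_derivative real (Suc n) * (x - c) ^ n * 1)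
        (at x within S)"
      by (rule derivative_eq_intros refl)+ simp
    then have "((\<lambda>s. (s - c) ^ Suc n / fact (Suc n)) has_real_derivative
        real (Suc n) * (x - c) ^ n * 1 / fact (Suc n)) (at x within S)"
      by (rule DERIV_cdivide)
    moreover have "real (Suc n) * (x - c) ^ n * 1 / fact (Suc n) = (x - c) ^ n / fact n"
      by (simp add: fact_Suc field_simps del: of_nat_Suc)
    ultimately show ?thesis
      by (simp add: has_real_derivative_iff_has_vector_derivative)
  qed
  \<comment> \<open>For n \<ge> 1 both one-sided derivatives vanish at the break point c.\<close>
  have "((\<lambda>x. if x \<in> {c..} then (x - c) ^ Suc n / fact (Suc n) else 0) has_vector_derivative
      (if t \<in> {c..} then (t - c) ^ n / fact n else 0)) (at t)"
    by (rule has_vector_derivative_If_within_closures[where T = "{..c}"];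
        (rule power derivative_eq_intros)?) (use Suc in auto)
  moreover have "(\<lambda>x. if x \<in> {c..} then (x - c) ^ Suc n / fact (Suc n) else 0)
      = trunc_power \<sigma> (Suc n)"
    by (auto simp: trunc_power_def c_def fun_eq_iff)
  moreover have "(if t \<in> {c..} then (t - c) ^ n / fact n else 0) = trunc_power \<sigma> n (t - \<sigma>)"
    by (auto simp: trunc_power_def c_def algebra_simps)
  ultimately show ?thesis
    by (auto simp: has_real_derivative_iff_has_vector_derivative
        intro: has_vector_derivative_at_within)
qed

definition ZZ_partial :: "real^'n^'n \<Rightarrow> real^'n^'n \<Rightarrow> real \<Rightarrow> nat \<Rightarrow> real \<Rightarrow> real^'n^'n"
  where "ZZ_partial A0 A1 \<sigma> N t = (\<Sum>r\<le>N. trunc_power \<sigma> r t *\<^sub>R QQ A0 A1 r)"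

lemma trunc_power_support_iff:
  assumes "\<sigma> > 0" "- \<sigma> \<le> t"
  shows "(real r - 1) * \<sigma> \<le> t \<longleftrightarrow> r \<le> nat (\<lfloor>t / \<sigma>\<rfloor> + 1)"
proof -
  have "-1 \<le> t / \<sigma>"
    using assms by (simp add: le_divide_eq)
  then have "-1 \<le> \<lfloor>t / \<sigma>\<rfloor>"
    by (simp add: le_floor_iff)
  moreover have "(real r - 1) * \<sigma> \<le> t \<longleftrightarrow> int r - 1 \<le> \<lfloor>t / \<sigma>\<rfloor>"
    using assms(1) by (simp add: le_floor_iff pos_le_divide_eq)
  ultimately show ?thesis
    by linarith
qed

lemma ZZ_eq_ZZ_partial:
  assumes "\<sigma> > 0" "- \<sigma> \<le> t" "t < real N * \<sigma>"
  shows "ZZ A0 A1 \<sigma> t = ZZ_partial A0 A1 \<sigma> N t"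
proof -
  let ?M = "nat (\<lfloor>t / \<sigma>\<rfloor> + 1)"
  have support: "(real r - 1) * \<sigma> \<le> t \<longleftrightarrow> r \<le> ?M" for r
    by (rule trunc_power_support_iff[OF assms(1,2)])
  have "?M \<le> N"
    using support[of "Suc N"] assms(3) by (simp add: algebra_simps)
  have "ZZ A0 A1 \<sigma> t = (\<Sum>r = 0..?M. ((t - (real r - 1) * \<sigma>) ^ r / fact r) *\<^sub>R QQ A0 A1 r)"
    using assms by (simp add: ZZ_def)
  also have "\<dots> = ZZ_partial A0 A1 \<sigma> N t"
    unfolding ZZ_partial_def atMost_atLeast0
    by (rule sum.mono_neutral_cong_left)
      (use \<open>?M \<le> N\<close> support in \<open>auto simp: trunc_power_def\<close>)
  finally show ?thesis .
qed

lemma sylvester_ZZ_partial: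
  "A0 ** ZZ_partial A0 A1 \<sigma> N t + ZZ_partial A0 A1 \<sigma> N t ** A1
     = (\<Sum>r\<le>N. trunc_power \<sigma> r t *\<^sub>R QQ A0 A1 (Suc r))"
proof -
  note linear = linear_sylvester[where A = A0 and B = A1]
  show ?thesis
    unfolding ZZ_partial_def
    using linear_sum[OF linear, of "\<lambda>r. trunc_power \<sigma> r t *\<^sub>R QQ A0 A1 r" "{..N}"]
    by (simp add: linear_scale[OF linear])
qed

lemma has_vector_derivative_ZZ_partial:
  assumes "\<sigma> \<ge> 0" "t \<ge> 0"
  shows "(ZZ_partial A0 A1 \<sigma> (Suc N) has_vector_derivative
           A0 ** ZZ_partial A0 A1 \<sigma> N (t - \<sigma>) + ZZ_partial A0 A1 \<sigma> N (t - \<sigma>) ** A1)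
         (at t within {0..})"
proof -
  have "ZZ_partial A0 A1 \<sigma> (Suc N) = (\<lambda>s. trunc_power \<sigma> 0 s *\<^sub>R mat 1
      + (\<Sum>r\<le>N. trunc_power \<sigma> (Suc r) s *\<^sub>R QQ A0 A1 (Suc r)))"
    by (rule ext) (simp only: ZZ_partial_def sum.atMost_Suc_shift QQ.simps(1))
  moreover have "((\<lambda>s. trunc_power \<sigma> 0 s *\<^sub>R mat 1
      + (\<Sum>r\<le>N. trunc_power \<sigma> (Suc r) s *\<^sub>R QQ A0 A1 (Suc r))) has_vector_derivative
      (trunc_power \<sigma> 0 t *\<^sub>R 0 + 0 *\<^sub>R mat 1)
      + (\<Sum>r\<le>N. trunc_power \<sigma> (Suc r) t *\<^sub>R 0
                    + trunc_power \<sigma> r (t - \<sigma>) *\<^sub>R QQ A0 A1 (Suc r)))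
      (at t within {0..})"
    using assms
    by (intro has_vector_derivative_add has_vector_derivative_sum has_vector_derivative_scaleR
        has_vector_derivative_const has_real_derivative_trunc_power_0
        has_real_derivative_trunc_power_Suc)
  ultimately show ?thesis
    by (simp add: sylvester_ZZ_partial)
qed

lemma ZZ_eq_mat_1:
  assumes "\<sigma> > 0" "t \<in> {-\<sigma>..0}"
  shows "ZZ A0 A1 \<sigma> t = mat 1"
proof -
  have "ZZ A0 A1 \<sigma> t = ZZ_partial A0 A1 \<sigma> 1 t"
    using assms by (intro ZZ_eq_ZZ_partial) auto
  also have "\<dots> = mat 1"
    using assms by (simp add: ZZ_partial_def trunc_power_def)
  finally show ?thesis .
qed

lemma has_vector_derivative_ZZ:
  assumes "\<sigma> > 0" "t \<ge> 0"
  shows "(ZZ A0 A1 \<sigma> has_vector_derivative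
           A0 ** ZZ A0 A1 \<sigma> (t - \<sigma>) + ZZ A0 A1 \<sigma> (t - \<sigma>) ** A1) (at t within {0..})"
proof -
  obtain N where N: "t < real N * \<sigma>"
    using reals_Archimedean3[OF assms(1)] by blast
  have delayed: "ZZ A0 A1 \<sigma> (t - \<sigma>) = ZZ_partial A0 A1 \<sigma> N (t - \<sigma>)"
    using assms N by (intro ZZ_eq_ZZ_partial) auto
  have "(ZZ A0 A1 \<sigma> has_vector_derivative
      A0 ** ZZ_partial A0 A1 \<sigma> N (t - \<sigma>) + ZZ_partial A0 A1 \<sigma> N (t - \<sigma>) ** A1)
      (at t within {0..})"
  proof (rule has_vector_derivative_transform_within[where d = \<sigma>])
    show "(ZZ_partial A0 A1 \<sigma> (Suc N) has_vector_derivative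
        A0 ** ZZ_partial A0 A1 \<sigma> N (t - \<sigma>) + ZZ_partial A0 A1 \<sigma> N (t - \<sigma>) ** A1)
        (at t within {0..})"
      using assms by (intro has_vector_derivative_ZZ_partial) auto
    fix s assume "s \<in> {0..}" "dist s t < \<sigma>"
    with assms N show "ZZ_partial A0 A1 \<sigma> (Suc N) s = ZZ A0 A1 \<sigma> s"
      by (intro ZZ_eq_ZZ_partial[symmetric]) (auto simp: dist_real_def algebra_simps)
  qed (use assms in auto)
  then show ?thesis
    by (simp add: delayed)
qed

lemma delay_equation_unique:
  fixes Y Z :: "real \<Rightarrow> 'a::real_normed_vector"
  assumes "\<sigma> > 0"
    and initial: "\<And>t. t \<in> {-\<sigma>..0} \<Longrightarrow> Y t = Z t"
    and Y: "\<And>t. t \<ge> 0 \<Longrightarrow> (Y has_vector_derivative F (Y (t - \<sigma>))) (at t within {0..})"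
    and Z: "\<And>t. t \<ge> 0 \<Longrightarrow> (Z has_vector_derivative F (Z (t - \<sigma>))) (at t within {0..})"
    and "t \<ge> - \<sigma>"
  shows "Y t = Z t"
proof -
  have "\<forall>t\<in>{-\<sigma>..real k * \<sigma>}. Y t = Z t" for k :: nat
  proof (induction k)
    case 0
    then show ?case
      using initial by simp
  next
    case (Suc k)
    let ?S = "{real k * \<sigma>..real (Suc k) * \<sigma>}"
    have "0 \<le> real k * \<sigma>"
      using assms(1) by simp
    then have "?S \<subseteq> {0..}"
      by (auto intro: order_trans)
    have "((\<lambda>s. Y s - Z s) has_vector_derivative 0) (at s within ?S)" if "s \<in> ?S" for s
    proof -
      have "s \<ge> 0"
        using that \<open>?S \<subseteq> {0..}\<close> by auto
      then have "s - \<sigma> \<in> {-\<sigma>..real k * \<sigma>}"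
        using that by (auto simp: algebra_simps)
      then have "Y (s - \<sigma>) = Z (s - \<sigma>)"
        using Suc.IH by blast
      moreover have "((\<lambda>s. Y s - Z s) has_vector_derivative F (Y (s - \<sigma>)) - F (Z (s - \<sigma>)))
          (at s within {0..})"
        using Y Z that \<open>?S \<subseteq> {0..}\<close> by (intro has_vector_derivative_diff) auto
      ultimately show ?thesis
        using \<open>?S \<subseteq> {0..}\<close> by (auto intro: has_vector_derivative_within_subset)
    qed
    then obtain c where c: "\<And>s. s \<in> ?S \<Longrightarrow> Y s - Z s = c"
      using has_vector_derivative_zero_constant[of ?S "\<lambda>s. Y s - Z s"] by auto
    have "real k * \<sigma> \<in> {-\<sigma>..real k * \<sigma>}" "real k * \<sigma> \<in> ?S"
      using assms(1) \<open>0 \<le> real k * \<sigma>\<close> by (simp_all add: order_trans[of _ 0])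
    then have "c = 0"
      using Suc.IH c by force
    show ?case
    proof
      fix s assume "s \<in> {-\<sigma>..real (Suc k) * \<sigma>}"
      then consider "s \<in> {-\<sigma>..real k * \<sigma>}" | "s \<in> ?S"
        by fastforce
      then show "Y s = Z s"
        using Suc.IH c \<open>c = 0\<close> by cases auto
    qed
  qed
  moreover obtain k :: nat where "t \<le> real k * \<sigma>"
    using reals_Archimedean3[OF assms(1)] less_imp_le by blast
  ultimately show ?thesis
    using \<open>t \<ge> - \<sigma>\<close> by auto
qed

theorem theorem2:
  fixes A0 A1 :: "real^'n^'n" and \<sigma> :: real
  assumes "\<sigma> > 0"
  shows "(\<forall>t\<in>{-\<sigma>..0}. ZZ A0 A1 \<sigma> t = mat 1)
    \<and> (\<forall>t\<ge>0. (ZZ A0 A1 \<sigma> has_vector_derivative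
            (A0 ** ZZ A0 A1 \<sigma> (t - \<sigma>) + ZZ A0 A1 \<sigma> (t - \<sigma>) ** A1)) (at t within {0..}))
    \<and> (\<forall>Y :: real \<Rightarrow> real^'n^'n.
          (\<forall>t\<in>{-\<sigma>..0}. Y t = mat 1)
          \<and> (\<forall>t\<ge>0. (Y has_vector_derivative
                (A0 ** Y (t - \<sigma>) + Y (t - \<sigma>) ** A1)) (at t within {0..}))
          \<longrightarrow> (\<forall>t\<ge>-\<sigma>. Y t = ZZ A0 A1 \<sigma> t))"
proof (intro conjI allI impI ballI)
  show initial: "ZZ A0 A1 \<sigma> t = mat 1" if "t \<in> {-\<sigma>..0}" for t
    using assms that by (rule ZZ_eq_mat_1)
  show derivative: "(ZZ A0 A1 \<sigma> has_vector_derivative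
      A0 ** ZZ A0 A1 \<sigma> (t - \<sigma>) + ZZ A0 A1 \<sigma> (t - \<sigma>) ** A1) (at t within {0..})"
    if "t \<ge> 0" for t
    using assms that by (rule has_vector_derivative_ZZ)
  fix Y :: "real \<Rightarrow> real^'n^'n" and t :: real
  assume Y: "(\<forall>t\<in>{-\<sigma>..0}. Y t = mat 1)
    \<and> (\<forall>t\<ge>0. (Y has_vector_derivative (A0 ** Y (t - \<sigma>) + Y (t - \<sigma>) ** A1)) (at t within {0..}))"
    and "t \<ge> - \<sigma>"
  show "Y t = ZZ A0 A1 \<sigma> t"
  proof (rule delay_equation_unique[where F = "\<lambda>X. A0 ** X + X ** A1",
        OF assms _ _ _ \<open>t \<ge> - \<sigma>\<close>])
    show "Y s = ZZ A0 A1 \<sigma> s" if "s \<in> {-\<sigma>..0}" for s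
      using Y initial that by simp
  qed (use Y derivative in simp_all)
qed

end
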